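(* Let $m\geq 4$ be an integer and let $G$ be an $m$-free digraph with at least one vertex. Define, for $v\in V(G)$ and $1\leq k\leq m-3$, $\alpha_k(v)=p_k(v)/s_k(v)$ and $\beta_k(v)=r'_k(v)/t_k(v)$ (with the conventions $a/0=+\infty$ for $a>0$ and $0/0=0$), and let $\alpha=\min_{v\in V(G),\,1\leq k\leq m-3}\alpha_k(v)$ and $\beta=\min_{v\in V(G),\,1\leq k\leq m-3}\beta_k(v)$. Then $\min\{\alpha,\beta\}\leq \frac{1}{m-2}$.
   Context: All digraphs are finite, without loops and without parallel edges. A digraph is $m$-free if it has no directed cycle of length at most $m$. For a vertex $v$ and $i\geq 0$, $N_i^+(v)$ is the set of vertices $u$ such that the shortest directed path from $v$ to $u$ has length exactly $i$. A directed path $(v_0,\dots,v_k)$ consists of distinct vertices with $(v_i,v_{i+1})$ an edge for each $i$; its length is $k$. It is induced if every edge of $G$ with both ends in $\{v_0,\dots,v_k\}$ is one of the edges $(v_i,v_{i+1})$; it is a shortest induced directed path if it is induced and $v_k\in N_k^+(v_0)$. Let $\mathscr{P}(G)$ be the set of shortest induced directed paths of $G$. For an integer $k\geq1$ and $v\in V(G)$: $P_k(v)$ (resp. $Q_k(v)$, $R_k(v)$) is the set of triples $(x,y,z)$ of vertices for which there exist vertices $w_1,\dots,w_k$ with $(x,w_1,\dots,w_k,y,z)\in\mathscr{P}(G)$ and $x=v$ (resp. $y=v$, $z=v$). $P'_k(v)$ (resp. $Q'_k(v)$, $R'_k(v)$) is the set of triples $(x,y,z)$ for which there exist $w_1,\dots,w_k$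 with $(x,y,w_1,\dots,w_k,z)\in\mathscr{P}(G)$ and $x=v$ (resp. $y=v$, $z=v$). Lowercase letters denote cardinalities: $p_k(v)=|P_k(v)|$, etc. For $1\leq k\leq m-3$: $s_k(v)=\sum_{i=k}^{m-3}p'_i(v)+\sum_{i=1}^{k}q'_i(v)$ and $t_k(v)=\sum_{i=k}^{m-3}r_i(v)+\sum_{i=1}^{k}q_i(v)$. *)

theory Defs
  imports "HOL-Library.Extended_Real"
begin

text \<open>A digraph is given by a finite vertex set V and an edge relation E \<subseteq> V \<times> V
  without loops (a relation automatically excludes parallel edges).\<close>

definition digraph :: "'a set \<Rightarrow> ('a \<times> 'a) set \<Rightarrow> bool" where
  "digraph V E \<longleftrightarrow> finite V \<and> E \<subseteq> V \<times> V \<and> (\<forall>v. (v, v) \<notin> E)"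

text \<open>A directed path (v_0,...,v_k) as a nonempty list of distinct vertices;
  its length is length xs - 1.\<close>
definition dpath :: "('a \<times> 'a) set \<Rightarrow> 'a list \<Rightarrow> bool" where
  "dpath E xs \<longleftrightarrow> xs \<noteq> [] \<and> distinct xs \<and>
     (\<forall>i. Suc i < length xs \<longrightarrow> (xs ! i, xs ! Suc i) \<in> E)"

definition dcycle :: "('a \<times> 'a) set \<Rightarrow> 'a list \<Rightarrow> bool" where
  "dcycle E cs \<longleftrightarrow> cs \<noteq> [] \<and> distinct cs \<and>
     (\<forall>i < length cs. (cs ! i, cs ! (Suc i mod length cs)) \<in> E)"

definition m_free :: "nat \<Rightarrow> ('a \<times> 'a) set \<Rightarrow> bool" where
  "m_free m E \<longleftrightarrow> \<not> (\<exists>cs. dcycle E cs \<and> length cs \<le> m)"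

definition Nout :: "'a set \<Rightarrow> ('a \<times> 'a) set \<Rightarrow> 'a \<Rightarrow> nat \<Rightarrow> 'a set" where
  "Nout V E v i = {u \<in> V. (\<exists>xs. dpath E xs \<and> hd xs = v \<and> last xs = u \<and> length xs = Suc i) \<and>
      \<not> (\<exists>xs. dpath E xs \<and> hd xs = v \<and> last xs = u \<and> length xs < Suc i)}"

definition induced_path :: "('a \<times> 'a) set \<Rightarrow> 'a list \<Rightarrow> bool" where
  "induced_path E xs \<longleftrightarrow> dpath E xs \<and>
     (\<forall>i < length xs. \<forall>j < length xs. (xs ! i, xs ! j) \<in> E \<longrightarrow> j = Suc i)"

definition SIP :: "'a set \<Rightarrow> ('a \<times> 'a) set \<Rightarrow> 'a list set" where
  "SIP V E = {xs. induced_path E xs \<and> last xs \<in> Nout V E (hd xs) (length xs - 1)}"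

definition Pk :: "'a set \<Rightarrow> ('a \<times> 'a) set \<Rightarrow> nat \<Rightarrow> 'a \<Rightarrow> ('a \<times> 'a \<times> 'a) set" where
  "Pk V E k v = {(x, y, z). \<exists>ws. length ws = k \<and> x # ws @ [y, z] \<in> SIP V E \<and> x = v}"
definition Qk :: "'a set \<Rightarrow> ('a \<times> 'a) set \<Rightarrow> nat \<Rightarrow> 'a \<Rightarrow> ('a \<times> 'a \<times> 'a) set" where
  "Qk V E k v = {(x, y, z). \<exists>ws. length ws = k \<and> x # ws @ [y, z] \<in> SIP V E \<and> y = v}"
definition Rk :: "'a set \<Rightarrow> ('a \<times> 'a) set \<Rightarrow> nat \<Rightarrow> 'a \<Rightarrow> ('a \<times> 'a \<times> 'a) set" where
  "Rk V E k v = {(x, y, z). \<exists>ws. length ws = k \<and> x # ws @ [y, z] \<in> SIP V E \<and> z = v}"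
definition Pk' :: "'a set \<Rightarrow> ('a \<times> 'a) set \<Rightarrow> nat \<Rightarrow> 'a \<Rightarrow> ('a \<times> 'a \<times> 'a) set" where
  "Pk' V E k v = {(x, y, z). \<exists>ws. length ws = k \<and> x # y # ws @ [z] \<in> SIP V E \<and> x = v}"
definition Qk' :: "'a set \<Rightarrow> ('a \<times> 'a) set \<Rightarrow> nat \<Rightarrow> 'a \<Rightarrow> ('a \<times> 'a \<times> 'a) set" where
  "Qk' V E k v = {(x, y, z). \<exists>ws. length ws = k \<and> x # y # ws @ [z] \<in> SIP V E \<and> y = v}"
definition Rk' :: "'a set \<Rightarrow> ('a \<times> 'a) set \<Rightarrow> nat \<Rightarrow> 'a \<Rightarrow> ('a \<times> 'a \<times> 'a) set" where
  "Rk' V E k v = {(x, y, z). \<exists>ws. length ws = k \<and> x # y # ws @ [z] \<in> SIP V E \<and> z = v}"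

definition s_k :: "nat \<Rightarrow> 'a set \<Rightarrow> ('a \<times> 'a) set \<Rightarrow> nat \<Rightarrow> 'a \<Rightarrow> nat" where
  "s_k m V E k v = (\<Sum>i=k..m-3. card (Pk' V E i v)) + (\<Sum>i=1..k. card (Qk' V E i v))"
definition t_k :: "nat \<Rightarrow> 'a set \<Rightarrow> ('a \<times> 'a) set \<Rightarrow> nat \<Rightarrow> 'a \<Rightarrow> nat" where
  "t_k m V E k v = (\<Sum>i=k..m-3. card (Rk V E i v)) + (\<Sum>i=1..k. card (Qk V E i v))"

definition ratio :: "nat \<Rightarrow> nat \<Rightarrow> ereal" where
  "ratio a b = (if b = 0 then (if a = 0 then 0 else \<infinity>) else ereal (real a / real b))"

definition alpha_k :: "nat \<Rightarrow> 'a set \<Rightarrow> ('a \<times> 'a) set \<Rightarrow> nat \<Rightarrow> 'a \<Rightarrow> ereal" where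
  "alpha_k m V E k v = ratio (card (Pk V E k v)) (s_k m V E k v)"
definition beta_k :: "nat \<Rightarrow> 'a set \<Rightarrow> ('a \<times> 'a) set \<Rightarrow> nat \<Rightarrow> 'a \<Rightarrow> ereal" where
  "beta_k m V E k v = ratio (card (Rk' V E k v)) (t_k m V E k v)"

definition alpha :: "nat \<Rightarrow> 'a set \<Rightarrow> ('a \<times> 'a) set \<Rightarrow> ereal" where
  "alpha m V E = Min {alpha_k m V E k v | k v. v \<in> V \<and> 1 \<le> k \<and> k \<le> m - 3}"
definition beta :: "nat \<Rightarrow> 'a set \<Rightarrow> ('a \<times> 'a) set \<Rightarrow> ereal" where
  "beta m V E = Min {beta_k m V E k v | k v. v \<in> V \<and> 1 \<le> k \<and> k \<le> m - 3}"

end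

theory Submission imports Defs begin

(* Proof idea: a double-counting argument.  Write n = m - 3 and let T_k (resp. T'_k) be the
   set of triples (x,y,z) read off the shortest induced paths x w_1 ... w_k y z
   (resp. x y w_1 ... w_k z).  Summing p_k(v), q_k(v), r_k(v) over all vertices v counts every
   triple of T_k exactly once, and likewise for the primed quantities and T'_k.  Hence
   summing s_k(v) over v gives the "window sum" W(|T'|, k) = sum_{i=k..n} |T'_i| + sum_{i=1..k} |T'_i|,
   and summing t_k(v) gives W(|T|, k).
   If both alpha and beta exceeded 1/(n+1), then (n+1) |T_k| > W(|T'|, k) and
   (n+1) |T'_k| > W(|T|, k) for all 1 <= k <= n.  But the window sums of any sequence f satisfy
   sum_{k=1..n} W(f, k) = (n+1) sum_{k=1..n} f_k, so summing over k yields both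
   (n+1) sum |T'| < (n+1) sum |T| and the reverse inequality, a contradiction. *)

definition window :: "(nat \<Rightarrow> 'b::comm_monoid_add) \<Rightarrow> nat \<Rightarrow> nat \<Rightarrow> 'b" where
  "window f n k = (\<Sum>i=k..n. f i) + (\<Sum>i=1..k. f i)"

text \<open>Every term f i is counted once in each of the n windows plus once more in window i,
  so the window sums add up to (n+1) times the total.\<close>
lemma sum_window:
  fixes f :: "nat \<Rightarrow> 'b::comm_semiring_1"
  shows "(\<Sum>k=1..n. window f n k) = of_nat (Suc n) * (\<Sum>i=1..n. f i)"
proof (induction n)
  case 0
  then show ?case by (simp add: window_def)
next
  case (Suc n)
  have step: "window f (Suc n) k = window f n k + f (Suc n)" if "k \<in> {1..n}" for k
    using that by (simp add: window_def sum.cl_ivl_Suc algebra_simps)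
  have "(\<Sum>k=1..Suc n. window f (Suc n) k)
      = (\<Sum>k=1..n. window f n k + f (Suc n)) + window f (Suc n) (Suc n)"
    by (simp add: sum.cl_ivl_Suc step)
  also have "\<dots> = of_nat (Suc n) * (\<Sum>i=1..n. f i) + of_nat n * f (Suc n)
                  + (f (Suc n) + (\<Sum>i=1..Suc n. f i))"
    using Suc by (simp add: sum.distrib window_def)
  finally show ?case by (simp add: sum.cl_ivl_Suc algebra_simps)
qed

text \<open>Two sequences cannot each strictly dominate (with factor n+1) the window sums of the
  other: summing over k would give two contradictory strict inequalities between the totals.\<close>
lemma no_mutual_window_domination:
  fixes a b :: "nat \<Rightarrow> 'b::linordered_semidom"
  assumes "1 \<le> n"
    and ab: "\<forall>k\<in>{1..n}. window b n k < of_nat (Suc n) * a k"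
    and ba: "\<forall>k\<in>{1..n}. window a n k < of_nat (Suc n) * b k"
  shows False
proof -
  have ne: "{1..n} \<noteq> {}" using \<open>1 \<le> n\<close> by simp
  have "(\<Sum>k=1..n. window b n k) < (\<Sum>k=1..n. of_nat (Suc n) * a k)"
    by (rule sum_strict_mono) (use ab ne in auto)
  then have "of_nat (Suc n) * (\<Sum>i=1..n. b i) < of_nat (Suc n) * (\<Sum>i=1..n. a i)"
    by (simp only: sum_window sum_distrib_left)
  moreover have "(\<Sum>k=1..n. window a n k) < (\<Sum>k=1..n. of_nat (Suc n) * b k)"
    by (rule sum_strict_mono) (use ba ne in auto)
  then have "of_nat (Suc n) * (\<Sum>i=1..n. a i) < of_nat (Suc n) * (\<Sum>i=1..n. b i)"
    by (simp only: sum_window sum_distrib_left)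
  ultimately show False by simp
qed

lemma ratio_gt_inverse:
  assumes "ereal (1 / real c) < ratio a b" and "0 < c"
  shows "b < c * a"
proof (cases "b = 0")
  case True
  then show ?thesis using assms by (auto simp: ratio_def split: if_splits)
next
  case False
  then have "1 / real c < real a / real b" using assms(1) by (simp add: ratio_def)
  then have "real b < real c * real a" using False assms(2) by (simp add: field_simps)
  then show ?thesis by (metis of_nat_less_iff of_nat_mult)
qed

lemma alpha_le_alpha_k:
  assumes "finite V" "v \<in> V" "1 \<le> k" "k \<le> m - 3"
  shows "alpha m V E \<le> alpha_k m V E k v"
proof -
  have "{alpha_k m V E k v | k v. v \<in> V \<and> 1 \<le> k \<and> k \<le> m - 3}
        = (\<lambda>(k, v). alpha_k m V E k v) ` ({1..m - 3} \<times> V)" by force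
  then show ?thesis unfolding alpha_def using assms by (auto intro!: Min_le)
qed

lemma beta_le_beta_k:
  assumes "finite V" "v \<in> V" "1 \<le> k" "k \<le> m - 3"
  shows "beta m V E \<le> beta_k m V E k v"
proof -
  have "{beta_k m V E k v | k v. v \<in> V \<and> 1 \<le> k \<and> k \<le> m - 3}
        = (\<lambda>(k, v). beta_k m V E k v) ` ({1..m - 3} \<times> V)" by force
  then show ?thesis unfolding beta_def using assms by (auto intro!: Min_le)
qed

lemma sum_card_fibres:
  assumes "finite V" "finite T" "f ` T \<subseteq> V"
  shows "(\<Sum>v\<in>V. card {t\<in>T. f t = v}) = card T"
  using sum.group[of T V f "\<lambda>_. 1::nat"] assms by simp

text \<open>A directed path with at least one edge only visits vertices of the digraph, since each
  of its vertices is an endpoint of one of its edges.\<close>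
lemma dpath_set_subset:
  assumes "dpath E xs" "E \<subseteq> V \<times> V" "2 \<le> length xs"
  shows "set xs \<subseteq> V"
proof
  fix x assume "x \<in> set xs"
  then obtain j where j: "j < length xs" "xs ! j = x" by (auto simp: in_set_conv_nth)
  show "x \<in> V"
  proof (cases "Suc j < length xs")
    case True
    then show ?thesis using assms j by (auto simp: dpath_def)
  next
    case False
    then have "Suc (j - 1) < length xs" "Suc (j - 1) = j" using j assms(3) by auto
    then show ?thesis using assms j unfolding dpath_def by (metis mem_Sigma_iff subsetD)
  qed
qed

text \<open>The triples (x, y, z) from shortest induced paths x w_1 ... w_k y z, and those from
  shortest induced paths x y w_1 ... w_k z; P_k, Q_k, R_k (resp. their primed versions) are the
  fibres of these sets over the three coordinates.\<close>
definition end_triples :: "'a set \<Rightarrow> ('a \<times> 'a) set \<Rightarrow> nat \<Rightarrow> ('a \<times> 'a \<times> 'a) set" where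
  "end_triples V E k = {(x, y, z). \<exists>ws. length ws = k \<and> x # ws @ [y, z] \<in> SIP V E}"

definition start_triples :: "'a set \<Rightarrow> ('a \<times> 'a) set \<Rightarrow> nat \<Rightarrow> ('a \<times> 'a \<times> 'a) set" where
  "start_triples V E k = {(x, y, z). \<exists>ws. length ws = k \<and> x # y # ws @ [z] \<in> SIP V E}"

lemma triples_subset:
  assumes "digraph V E"
  shows "end_triples V E k \<subseteq> V \<times> V \<times> V" "start_triples V E k \<subseteq> V \<times> V \<times> V"
proof -
  have EV: "E \<subseteq> V \<times> V" using assms by (simp add: digraph_def)
  have sip: "set xs \<subseteq> V" if "xs \<in> SIP V E" "2 \<le> length xs" for xs
    using dpath_set_subset[OF _ EV that(2)] that(1) by (auto simp: SIP_def induced_path_def)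
  show "end_triples V E k \<subseteq> V \<times> V \<times> V"
    unfolding end_triples_def using sip by fastforce
  show "start_triples V E k \<subseteq> V \<times> V \<times> V"
    unfolding start_triples_def using sip by fastforce
qed

lemma sum_card_coordinate_fibres:
  assumes "finite V" "T \<subseteq> V \<times> V \<times> V"
  shows "(\<Sum>v\<in>V. card {t\<in>T. fst t = v}) = card T"
    "(\<Sum>v\<in>V. card {t\<in>T. fst (snd t) = v}) = card T"
    "(\<Sum>v\<in>V. card {t\<in>T. snd (snd t) = v}) = card T"
proof -
  have "finite T" using assms finite_subset by blast
  then show "(\<Sum>v\<in>V. card {t\<in>T. fst t = v}) = card T"
    "(\<Sum>v\<in>V. card {t\<in>T. fst (snd t) = v}) = card T"
    "(\<Sum>v\<in>V. card {t\<in>T. snd (snd t) = v}) = card T"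
    using assms by (auto intro!: sum_card_fibres)
qed

lemma sum_card_triple_fibres:
  assumes "digraph V E"
  shows "(\<Sum>v\<in>V. card (Pk V E k v)) = card (end_triples V E k)"
    "(\<Sum>v\<in>V. card (Qk V E k v)) = card (end_triples V E k)"
    "(\<Sum>v\<in>V. card (Rk V E k v)) = card (end_triples V E k)"
    "(\<Sum>v\<in>V. card (Pk' V E k v)) = card (start_triples V E k)"
    "(\<Sum>v\<in>V. card (Qk' V E k v)) = card (start_triples V E k)"
    "(\<Sum>v\<in>V. card (Rk' V E k v)) = card (start_triples V E k)"
proof -
  have fin: "finite V" using assms by (simp add: digraph_def)
  have "Pk V E k v = {t \<in> end_triples V E k. fst t = v}"
    "Qk V E k v = {t \<in> end_triples V E k. fst (snd t) = v}"
    "Rk V E k v = {t \<in> end_triples V E k. snd (snd t) = v}"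
    "Pk' V E k v = {t \<in> start_triples V E k. fst t = v}"
    "Qk' V E k v = {t \<in> start_triples V E k. fst (snd t) = v}"
    "Rk' V E k v = {t \<in> start_triples V E k. snd (snd t) = v}" for v
    unfolding Pk_def Qk_def Rk_def Pk'_def Qk'_def Rk'_def end_triples_def start_triples_def
    by auto
  then show "(\<Sum>v\<in>V. card (Pk V E k v)) = card (end_triples V E k)"
    "(\<Sum>v\<in>V. card (Qk V E k v)) = card (end_triples V E k)"
    "(\<Sum>v\<in>V. card (Rk V E k v)) = card (end_triples V E k)"
    "(\<Sum>v\<in>V. card (Pk' V E k v)) = card (start_triples V E k)"
    "(\<Sum>v\<in>V. card (Qk' V E k v)) = card (start_triples V E k)"
    "(\<Sum>v\<in>V. card (Rk' V E k v)) = card (start_triples V E k)"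
    using sum_card_coordinate_fibres[OF fin triples_subset(1)[OF assms]]
      sum_card_coordinate_fibres[OF fin triples_subset(2)[OF assms]] by simp_all
qed

lemma sum_s_k:
  assumes "digraph V E"
  shows "(\<Sum>v\<in>V. s_k m V E k v) = window (\<lambda>i. card (start_triples V E i)) (m - 3) k"
proof -
  have "(\<Sum>v\<in>V. s_k m V E k v)
      = (\<Sum>v\<in>V. \<Sum>i=k..m-3. card (Pk' V E i v)) + (\<Sum>v\<in>V. \<Sum>i=1..k. card (Qk' V E i v))"
    unfolding s_k_def by (rule sum.distrib)
  also have "\<dots> = (\<Sum>i=k..m-3. \<Sum>v\<in>V. card (Pk' V E i v)) + (\<Sum>i=1..k. \<Sum>v\<in>V. card (Qk' V E i v))"
    by (simp only: sum.swap[of _ V])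
  finally show ?thesis by (simp only: window_def sum_card_triple_fibres[OF assms])
qed

lemma sum_t_k:
  assumes "digraph V E"
  shows "(\<Sum>v\<in>V. t_k m V E k v) = window (\<lambda>i. card (end_triples V E i)) (m - 3) k"
proof -
  have "(\<Sum>v\<in>V. t_k m V E k v)
      = (\<Sum>v\<in>V. \<Sum>i=k..m-3. card (Rk V E i v)) + (\<Sum>v\<in>V. \<Sum>i=1..k. card (Qk V E i v))"
    unfolding t_k_def by (rule sum.distrib)
  also have "\<dots> = (\<Sum>i=k..m-3. \<Sum>v\<in>V. card (Rk V E i v)) + (\<Sum>i=1..k. \<Sum>v\<in>V. card (Qk V E i v))"
    by (simp only: sum.swap[of _ V])
  finally show ?thesis by (simp only: window_def sum_card_triple_fibres[OF assms])
qed

lemma window_bound_from_alpha: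
  assumes G: "digraph V E" and "V \<noteq> {}" and "0 < c" and k: "1 \<le> k" "k \<le> m - 3"
    and alpha: "ereal (1 / real c) < alpha m V E"
  shows "window (\<lambda>i. card (start_triples V E i)) (m - 3) k < c * card (end_triples V E k)"
proof -
  have fin: "finite V" using G by (simp add: digraph_def)
  have "s_k m V E k v < c * card (Pk V E k v)" if "v \<in> V" for v
  proof (rule ratio_gt_inverse[OF _ \<open>0 < c\<close>])
    show "ereal (1 / real c) < ratio (card (Pk V E k v)) (s_k m V E k v)"
      using alpha alpha_le_alpha_k[OF fin that k, of E] unfolding alpha_k_def by order
  qed
  then have "(\<Sum>v\<in>V. s_k m V E k v) < (\<Sum>v\<in>V. c * card (Pk V E k v))"
    using fin \<open>V \<noteq> {}\<close> by (intro sum_strict_mono) auto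
  then show ?thesis
    by (simp only: sum_s_k[OF G] sum_distrib_left[symmetric] sum_card_triple_fibres[OF G])
qed

lemma window_bound_from_beta:
  assumes G: "digraph V E" and "V \<noteq> {}" and "0 < c" and k: "1 \<le> k" "k \<le> m - 3"
    and beta: "ereal (1 / real c) < beta m V E"
  shows "window (\<lambda>i. card (end_triples V E i)) (m - 3) k < c * card (start_triples V E k)"
proof -
  have fin: "finite V" using G by (simp add: digraph_def)
  have "t_k m V E k v < c * card (Rk' V E k v)" if "v \<in> V" for v
  proof (rule ratio_gt_inverse[OF _ \<open>0 < c\<close>])
    show "ereal (1 / real c) < ratio (card (Rk' V E k v)) (t_k m V E k v)"
      using beta beta_le_beta_k[OF fin that k, of E] unfolding beta_k_def by order
  qed
  then have "(\<Sum>v\<in>V. t_k m V E k v) < (\<Sum>v\<in>V. c * card (Rk' V E k v))"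
    using fin \<open>V \<noteq> {}\<close> by (intro sum_strict_mono) auto
  then show ?thesis
    by (simp only: sum_t_k[OF G] sum_distrib_left[symmetric] sum_card_triple_fibres[OF G])
qed

theorem lemma2p5:
  fixes V :: "'a set" and E :: "('a \<times> 'a) set" and m :: nat
  assumes "m \<ge> 4" and "digraph V E" and "m_free m E" and "V \<noteq> {}"
  shows "min (alpha m V E) (beta m V E) \<le> ereal (1 / (real m - 2))"
proof (rule ccontr)
  assume above: "\<not> ?thesis"
  define n where "n = m - 3"
  have n: "1 \<le> n" "real m - 2 = real (Suc n)" using \<open>m \<ge> 4\<close> by (auto simp: n_def)
  have alpha: "ereal (1 / real (Suc n)) < alpha m V E"
    and beta: "ereal (1 / real (Suc n)) < beta m V E"
    using above unfolding n(2) by (auto simp: not_le simp del: of_nat_Suc)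
  show False
  proof (rule no_mutual_window_domination[OF \<open>1 \<le> n\<close>])
    show "\<forall>k\<in>{1..n}. window (\<lambda>i. card (start_triples V E i)) n k
        < of_nat (Suc n) * card (end_triples V E k)"
      using window_bound_from_alpha[OF \<open>digraph V E\<close> \<open>V \<noteq> {}\<close> _ _ _ alpha] by (simp add: n_def)
    show "\<forall>k\<in>{1..n}. window (\<lambda>i. card (end_triples V E i)) n k
        < of_nat (Suc n) * card (start_triples V E k)"
      using window_bound_from_beta[OF \<open>digraph V E\<close> \<open>V \<noteq> {}\<close> _ _ _ beta] by (simp add: n_def)
  qed
qed

end
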